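(* Let $\pi_0$ be a fixed policy and $\epsilon>0$. For a parameterized policy $\pi_\theta$ let $\rho=\rho_\theta(a|s)=\pi_\theta(a|s)/\pi_0(a|s)$ and $$J_{PPO}(\theta)=\mathbb{E}_{s\sim d_{\pi_0},a\sim\pi_0(\cdot|s)}\left[\min\{\mathrm{clip}(\rho,1-\epsilon,1+\epsilon)A_{\pi_0}(s,a),\ \rho A_{\pi_0}(s,a)\}\right].$$ Define $J'(\theta)=\mathbb{E}_{s\sim d_{\pi_0},a\sim\pi_0(\cdot|s)}[l'(\rho_\theta(a|s))]$, where, writing $A_{\pi_0}=A_{\pi_0}(s,a)$, $$l'(\rho)=\begin{cases}|A_{\pi_0}|\cdot|\rho-(1+\epsilon\,\mathrm{sign}(A_{\pi_0}))|,&[\rho-(1+\epsilon\,\mathrm{sign}(A_{\pi_0}))]\cdot A_{\pi_0}\le0,\\ 0,&\text{otherwise}.\end{cases}$$ Then optimizing (maximizing) $J_{PPO}(\theta)$ is equivalent to minimizing $J'(\theta)$.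
   Context: Infinite-horizon discounted MDP with discount $\gamma\in(0,1)$, initial distribution $d_0$; $d_{\pi}(s)=\sum_{t\ge0}\gamma^t\Pr(s_t=s)$ is the unnormalized discounted state visitation under policy $\pi$; $A_{\pi_0}=Q_{\pi_0}-V_{\pi_0}$ is the advantage function of $\pi_0$. $\mathrm{clip}(x,l,u)=\min(\max(x,l),u)$. *)

theory Defs
  imports "HOL-Analysis.Analysis"
begin

text \<open>P s a s' transition probability, r s a reward, d0 initial distribution,
  a (stochastic) policy is pol :: 's => 'a => real with pol s a = probability of a in s.\<close>

definition clip :: "real \<Rightarrow> real \<Rightarrow> real \<Rightarrow> real" where
  "clip x l u = min (max x l) u"

definition is_policy :: "('s::finite \<Rightarrow> 'a::finite \<Rightarrow> real) \<Rightarrow> bool" where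
  "is_policy pol \<longleftrightarrow> (\<forall>s a. pol s a \<ge> 0) \<and> (\<forall>s. (\<Sum>a\<in>UNIV. pol s a) = 1)"

definition is_distr :: "('s::finite \<Rightarrow> real) \<Rightarrow> bool" where
  "is_distr d \<longleftrightarrow> (\<forall>s. d s \<ge> 0) \<and> (\<Sum>s\<in>UNIV. d s) = 1"

definition is_mdp :: "('s::finite \<Rightarrow> 'a::finite \<Rightarrow> 's \<Rightarrow> real) \<Rightarrow> bool" where
  "is_mdp P \<longleftrightarrow> (\<forall>s a. is_distr (P s a))"

fun state_dist :: "('s::finite \<Rightarrow> 'a::finite \<Rightarrow> 's \<Rightarrow> real) \<Rightarrow> ('s \<Rightarrow> 'a \<Rightarrow> real)
      \<Rightarrow> ('s \<Rightarrow> real) \<Rightarrow> nat \<Rightarrow> 's \<Rightarrow> real" where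
  "state_dist P pol d 0 s = d s"
| "state_dist P pol d (Suc t) s' =
     (\<Sum>s\<in>UNIV. state_dist P pol d t s * (\<Sum>a\<in>UNIV. pol s a * P s a s'))"

text \<open>Unnormalized discounted state visitation d_pi(s) = sum_t gamma^t Pr(s_t = s).\<close>
definition visitation :: "('s::finite \<Rightarrow> 'a::finite \<Rightarrow> 's \<Rightarrow> real) \<Rightarrow> real
      \<Rightarrow> ('s \<Rightarrow> real) \<Rightarrow> ('s \<Rightarrow> 'a \<Rightarrow> real) \<Rightarrow> 's \<Rightarrow> real" where
  "visitation P \<gamma> d0 pol s = (\<Sum>t. \<gamma> ^ t * state_dist P pol d0 t s)"

definition value_fun :: "('s::finite \<Rightarrow> 'a::finite \<Rightarrow> 's \<Rightarrow> real) \<Rightarrow> ('s \<Rightarrow> 'a \<Rightarrow> real)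
      \<Rightarrow> real \<Rightarrow> ('s \<Rightarrow> 'a \<Rightarrow> real) \<Rightarrow> 's \<Rightarrow> real" where
  "value_fun P r \<gamma> pol s0 =
     (\<Sum>t. \<gamma> ^ t * (\<Sum>s\<in>UNIV. state_dist P pol (\<lambda>s'. if s' = s0 then 1 else 0) t s *
                      (\<Sum>a\<in>UNIV. pol s a * r s a)))"

definition q_fun :: "('s::finite \<Rightarrow> 'a::finite \<Rightarrow> 's \<Rightarrow> real) \<Rightarrow> ('s \<Rightarrow> 'a \<Rightarrow> real)
      \<Rightarrow> real \<Rightarrow> ('s \<Rightarrow> 'a \<Rightarrow> real) \<Rightarrow> 's \<Rightarrow> 'a \<Rightarrow> real" where
  "q_fun P r \<gamma> pol s a = r s a + \<gamma> * (\<Sum>s'\<in>UNIV. P s a s' * value_fun P r \<gamma> pol s')"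

definition advantage :: "('s::finite \<Rightarrow> 'a::finite \<Rightarrow> 's \<Rightarrow> real) \<Rightarrow> ('s \<Rightarrow> 'a \<Rightarrow> real)
      \<Rightarrow> real \<Rightarrow> ('s \<Rightarrow> 'a \<Rightarrow> real) \<Rightarrow> 's \<Rightarrow> 'a \<Rightarrow> real" where
  "advantage P r \<gamma> pol s a = q_fun P r \<gamma> pol s a - value_fun P r \<gamma> pol s"

text \<open>E_{s ~ d_{pi0}, a ~ pi0(.|s)} [g s a]  (d_{pi0} unnormalized, as in the paper).\<close>
definition expect_pi0 :: "('s::finite \<Rightarrow> 'a::finite \<Rightarrow> 's \<Rightarrow> real) \<Rightarrow> real
      \<Rightarrow> ('s \<Rightarrow> real) \<Rightarrow> ('s \<Rightarrow> 'a \<Rightarrow> real) \<Rightarrow> ('s \<Rightarrow> 'a \<Rightarrow> real) \<Rightarrow> real" where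
  "expect_pi0 P \<gamma> d0 pi0 g =
     (\<Sum>s\<in>UNIV. visitation P \<gamma> d0 pi0 s * (\<Sum>a\<in>UNIV. pi0 s a * g s a))"

definition J_PPO where
  "J_PPO P r \<gamma> d0 pi0 \<epsilon> pi_th \<theta> =
     expect_pi0 P \<gamma> d0 pi0 (\<lambda>s a.
       (let \<rho> = pi_th \<theta> s a / pi0 s a; A = advantage P r \<gamma> pi0 s a
        in min (clip \<rho> (1 - \<epsilon>) (1 + \<epsilon>) * A) (\<rho> * A)))"

definition l' :: "real \<Rightarrow> real \<Rightarrow> real \<Rightarrow> real" where
  "l' \<epsilon> A \<rho> = (if (\<rho> - (1 + \<epsilon> * sgn A)) * A \<le> 0
                 then \<bar>A\<bar> * \<bar>\<rho> - (1 + \<epsilon> * sgn A)\<bar> else 0)"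

definition J' where
  "J' P r \<gamma> d0 pi0 \<epsilon> pi_th \<theta> =
     expect_pi0 P \<gamma> d0 pi0 (\<lambda>s a.
       l' \<epsilon> (advantage P r \<gamma> pi0 s a) (pi_th \<theta> s a / pi0 s a))"

end

theory Submission
  imports Defs
begin

text \<open>For \<open>A > 0\<close> the clipped surrogate equals \<open>A * min \<rho> (1 + \<epsilon>)\<close>, for \<open>A < 0\<close> it equals
  \<open>A * max \<rho> (1 - \<epsilon>)\<close>: the clipping binds only where it lowers the objective. Both cases read
  \<open>min (b * A) (\<rho> * A)\<close> with \<open>b = 1 + \<epsilon> * sgn A\<close>, which is \<open>b * A - l' \<epsilon> A \<rho>\<close>. Taking
  expectations, \<open>J_PPO = c - J'\<close> with \<open>c\<close> independent of \<open>\<theta>\<close>.\<close>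

lemma l'_eq_max_0: "l' \<epsilon> A \<rho> = max 0 ((1 + \<epsilon> * sgn A - \<rho>) * A)"
proof -
  have "\<bar>A\<bar> * \<bar>\<rho> - (1 + \<epsilon> * sgn A)\<bar> = \<bar>(1 + \<epsilon> * sgn A - \<rho>) * A\<bar>"
    by (simp add: abs_mult abs_minus_commute)
  then show ?thesis
    unfolding l'_def by (auto simp: algebra_simps)
qed

lemma min_clip_mult_eq:
  fixes \<epsilon> A \<rho> :: real
  assumes "\<epsilon> \<ge> 0"
  shows "min (clip \<rho> (1 - \<epsilon>) (1 + \<epsilon>) * A) (\<rho> * A) = min ((1 + \<epsilon> * sgn A) * A) (\<rho> * A)"
proof -
  consider "A > 0" | "A < 0" | "A = 0"
    by linarith
  then show ?thesis
  proof cases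
    case 1
    have "min (clip \<rho> (1 - \<epsilon>) (1 + \<epsilon>)) \<rho> = min (1 + \<epsilon>) \<rho>"
      using assms by (auto simp: clip_def)
    with 1 show ?thesis
      by (metis less_imp_le min_mult_distrib_right sgn_pos mult_1_right)
  next
    case 2
    have "max (clip \<rho> (1 - \<epsilon>) (1 + \<epsilon>)) \<rho> = max (1 - \<epsilon>) \<rho>"
      using assms by (auto simp: clip_def)
    with 2 show ?thesis
      by (metis not_le max_mult_distrib_right sgn_neg mult_minus1_right diff_conv_add_uminus)
  qed simp
qed

lemma min_clip_mult_eq_diff_l':
  fixes \<epsilon> A \<rho> :: real
  assumes "\<epsilon> \<ge> 0"
  shows "min (clip \<rho> (1 - \<epsilon>) (1 + \<epsilon>) * A) (\<rho> * A) = (1 + \<epsilon> * sgn A) * A - l' \<epsilon> A \<rho>"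
  unfolding min_clip_mult_eq[OF assms] l'_eq_max_0 by (simp add: algebra_simps min_def max_def)

lemma expect_pi0_diff:
  "expect_pi0 P \<gamma> d0 pi0 (\<lambda>s a. f s a - g s a) = expect_pi0 P \<gamma> d0 pi0 f - expect_pi0 P \<gamma> d0 pi0 g"
  unfolding expect_pi0_def by (simp add: right_diff_distrib sum_subtractf)

theorem proposition1:
  fixes P :: "'s::finite \<Rightarrow> 'a::finite \<Rightarrow> 's \<Rightarrow> real"
    and r :: "'s \<Rightarrow> 'a \<Rightarrow> real"
    and d0 :: "'s \<Rightarrow> real"
    and \<gamma> \<epsilon> :: real
    and pi0 :: "'s \<Rightarrow> 'a \<Rightarrow> real"
    and pi_th :: "'th \<Rightarrow> 's \<Rightarrow> 'a \<Rightarrow> real"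
  assumes "is_mdp P" and "is_distr d0" and "0 < \<gamma>" and "\<gamma> < 1"
    and "is_policy pi0" and "\<And>\<theta>. is_policy (pi_th \<theta>)"
    and "\<epsilon> > 0"
  shows "(\<exists>c. \<forall>\<theta>. J_PPO P r \<gamma> d0 pi0 \<epsilon> pi_th \<theta> = c - J' P r \<gamma> d0 pi0 \<epsilon> pi_th \<theta>)
       \<and> (\<forall>\<theta>. (\<forall>\<theta>'. J_PPO P r \<gamma> d0 pi0 \<epsilon> pi_th \<theta>' \<le> J_PPO P r \<gamma> d0 pi0 \<epsilon> pi_th \<theta>)
               \<longleftrightarrow> (\<forall>\<theta>'. J' P r \<gamma> d0 pi0 \<epsilon> pi_th \<theta> \<le> J' P r \<gamma> d0 pi0 \<epsilon> pi_th \<theta>'))"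
proof -
  let ?A = "advantage P r \<gamma> pi0"
  define c where "c = expect_pi0 P \<gamma> d0 pi0 (\<lambda>s a. (1 + \<epsilon> * sgn (?A s a)) * ?A s a)"
  have "J_PPO P r \<gamma> d0 pi0 \<epsilon> pi_th \<theta> = c - J' P r \<gamma> d0 pi0 \<epsilon> pi_th \<theta>" for \<theta>
    using \<open>\<epsilon> > 0\<close> unfolding J_PPO_def J'_def c_def Let_def
    by (simp only: min_clip_mult_eq_diff_l' less_imp_le expect_pi0_diff)
  then show ?thesis
    by auto
qed

end
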